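(* Let $k\ge 2$, $D'=\{0,1,\dots,k\}$ and $D=\{1,\dots,k\}$. The class of $k$-submodular functions on $D'$ is persistent with respect to the integral domain $D$: for every $k$-submodular $f:(D')^n\to\mathbb{R}$ and every minimiser $X^*$ of $f$ over $(D')^n$, there is a minimiser $X$ of $f$ over $D^n$ such that $X_i=X^*_i$ for every coordinate $i$ with $X^*_i\ne 0$. Furthermore, the class contains all hard constants from $D$: for each $d\in D$ there is a unary $k$-submodular function $f_d$ on $D'$ which has $v=d$ as its unique minimum.
   Context: Define symmetric idempotent operations $\sqcap,\sqcup$ on $D'=\{0,\dots,k\}$ by $0\sqcap x=0$, $0\sqcup x=x$, $x\sqcap x=x\sqcup x=x$, and $x\sqcap y=x\sqcup y=0$ for distinct $x,y\in D'\setminus\{0\}$. A function $f:(D')^r\to\mathbb{R}$ is $k$-submodular if $f(X)+f(Y)\ge f(X\sqcap Y)+f(X\sqcup Y)$ for all $X,Y\in(D')^r$, the operations applied coordinatewise. *)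

theory Defs
  imports Complex_Main
begin

definition kmeet :: "nat \<Rightarrow> nat \<Rightarrow> nat" where
  "kmeet x y = (if x = y then x else 0)"

definition kjoin :: "nat \<Rightarrow> nat \<Rightarrow> nat" where
  "kjoin x y = (if x = 0 then y else if y = 0 then x else if x = y then x else 0)"

definition tuples :: "nat set \<Rightarrow> nat \<Rightarrow> nat list set" where
  "tuples A n = {X. length X = n \<and> set X \<subseteq> A}"

definition k_submodular :: "nat \<Rightarrow> nat \<Rightarrow> (nat list \<Rightarrow> real) \<Rightarrow> bool" where
  "k_submodular k n f \<longleftrightarrow>
     (\<forall>X \<in> tuples {0..k} n. \<forall>Y \<in> tuples {0..k} n.
        f X + f Y \<ge> f (map2 kmeet X Y) + f (map2 kjoin X Y))"

definition is_minimiser :: "(nat list \<Rightarrow> real) \<Rightarrow> nat list set \<Rightarrow> nat list \<Rightarrow> bool" where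
  "is_minimiser f S X \<longleftrightarrow> X \<in> S \<and> (\<forall>Y \<in> S. f X \<le> f Y)"

end

theory Submission
  imports Defs
begin

text \<open>Let \<open>X\<close> minimise \<open>f\<close> over \<open>D\<^sup>n\<close> and let \<open>X\<^sup>*\<close> minimise it over \<open>D'\<^sup>n\<close>.
  Since \<open>f (X\<^sup>* \<sqinter> Y) \<ge> f X\<^sup>*\<close>, \<open>k\<close>-submodularity gives \<open>f (X\<^sup>* \<squnion> Y) \<le> f Y\<close> for every \<open>Y\<close>.
  Applying this twice, \<open>f (X\<^sup>* \<squnion> (X\<^sup>* \<squnion> X)) \<le> f X\<close>, and \<open>X\<^sup>* \<squnion> (X\<^sup>* \<squnion> X)\<close> is exactly \<open>X\<close>
  overwritten by the non-zero entries of \<open>X\<^sup>*\<close>; so it lies in \<open>D\<^sup>n\<close> and is again a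
  minimiser there.\<close>

lemma kmeet_le: "a \<le> k \<Longrightarrow> b \<le> k \<Longrightarrow> kmeet a b \<le> k"
  by (simp add: kmeet_def)

lemma kjoin_le: "a \<le> k \<Longrightarrow> b \<le> k \<Longrightarrow> kjoin a b \<le> k"
  by (simp add: kjoin_def)

lemma kjoin_kjoin_nonzero: "y \<noteq> 0 \<Longrightarrow> kjoin a (kjoin a y) = (if a = 0 then y else a)"
  by (simp add: kjoin_def)

lemma map2_in_tuples:
  assumes "X \<in> tuples {0..k} n" "Y \<in> tuples {0..k} n"
    and "\<And>a b. a \<le> k \<Longrightarrow> b \<le> k \<Longrightarrow> h a b \<le> k"
  shows "map2 h X Y \<in> tuples {0..k} n"
  using assms unfolding tuples_def by (auto simp: set_zip subset_iff)

lemma finite_tuples: "finite A \<Longrightarrow> finite (tuples A n)"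
  using finite_lists_length_eq[of A n] by (simp add: tuples_def conj_commute)

lemma is_minimiser_exists:
  assumes "finite S" "S \<noteq> {}"
  shows "\<exists>X. is_minimiser f S X"
  using arg_min_if_finite[OF assms, of f] unfolding is_minimiser_def
  by (metis not_less)

lemma k_submodular_join_minimiser_le:
  assumes "k_submodular k n f" "is_minimiser f (tuples {0..k} n) Xs" "Y \<in> tuples {0..k} n"
  shows "f (map2 kjoin Xs Y) \<le> f Y"
proof -
  have Xs: "Xs \<in> tuples {0..k} n" using assms(2) by (simp add: is_minimiser_def)
  have "f Xs \<le> f (map2 kmeet Xs Y)"
    using assms(2) map2_in_tuples[OF Xs assms(3) kmeet_le] by (simp add: is_minimiser_def)
  moreover have "f Xs + f Y \<ge> f (map2 kmeet Xs Y) + f (map2 kjoin Xs Y)"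
    using assms(1) Xs assms(3) unfolding k_submodular_def by blast
  ultimately show ?thesis by linarith
qed

lemma k_submodular_persistent:
  assumes f: "k_submodular k n f" and Xs: "is_minimiser f (tuples {0..k} n) Xs" and "k \<ge> 1"
  shows "\<exists>X. is_minimiser f (tuples {1..k} n) X \<and> (\<forall>i<n. Xs ! i \<noteq> 0 \<longrightarrow> X ! i = Xs ! i)"
proof -
  have "replicate n 1 \<in> tuples {1..k} n" using \<open>k \<ge> 1\<close> by (auto simp: tuples_def)
  then obtain X where X: "is_minimiser f (tuples {1..k} n) X"
    using is_minimiser_exists[OF finite_tuples] by blast
  have X_tuple: "X \<in> tuples {1..k} n" and X_le: "\<forall>Y \<in> tuples {1..k} n. f X \<le> f Y"
    using X by (auto simp: is_minimiser_def)
  have Xs_tuple: "Xs \<in> tuples {0..k} n"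
    using Xs by (simp add: is_minimiser_def)
  have X_tuple': "X \<in> tuples {0..k} n"
    using X_tuple by (auto simp: tuples_def)
  define W where "W = map2 kjoin Xs (map2 kjoin Xs X)"
  have "f W \<le> f (map2 kjoin Xs X)"
    unfolding W_def
    by (rule k_submodular_join_minimiser_le[OF f Xs map2_in_tuples[OF Xs_tuple X_tuple' kjoin_le]])
  also have "\<dots> \<le> f X"
    by (rule k_submodular_join_minimiser_le[OF f Xs X_tuple'])
  finally have fW: "f W \<le> f X" .
  have W_nth: "W ! i = (if Xs ! i = 0 then X ! i else Xs ! i)" if "i < n" for i
  proof -
    have "X ! i \<noteq> 0" using X_tuple that by (auto simp: tuples_def dest!: nth_mem)
    thus ?thesis using X_tuple Xs_tuple that by (simp add: W_def tuples_def kjoin_kjoin_nonzero)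
  qed
  have "W \<in> tuples {1..k} n"
  proof -
    have "W ! i \<in> {1..k}" if "i < n" for i
    proof -
      have "X ! i \<in> set X" "Xs ! i \<in> set Xs"
        using X_tuple Xs_tuple that by (auto simp: tuples_def)
      thus ?thesis using W_nth[OF that] X_tuple Xs_tuple by (auto simp: tuples_def)
    qed
    moreover have "length W = n" using X_tuple Xs_tuple by (simp add: W_def tuples_def)
    ultimately show ?thesis by (auto simp: tuples_def in_set_conv_nth)
  qed
  with fW X_le have "is_minimiser f (tuples {1..k} n) W"
    by (auto simp: is_minimiser_def)
  with W_nth show ?thesis by auto
qed

lemma k_submodular_hard_constant:
  assumes "d \<in> {1..k}"
  shows "\<exists>g :: nat \<Rightarrow> real. k_submodular k 1 (\<lambda>X. g (hd X)) \<and>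
            (\<forall>v \<in> {0..k}. v \<noteq> d \<longrightarrow> g d < g v)"
proof -
  define g :: "nat \<Rightarrow> real" where "g v = (if v = d then 0 else if v = 0 then 1 else 2)" for v
  have "k_submodular k 1 (\<lambda>X. g (hd X))"
    unfolding k_submodular_def
  proof (intro ballI)
    fix X Y assume "X \<in> tuples {0..k} 1" "Y \<in> tuples {0..k} 1"
    then obtain x y where "X = [x]" "Y = [y]"
      by (auto simp: tuples_def length_Suc_conv)
    thus "g (hd (map2 kmeet X Y)) + g (hd (map2 kjoin X Y)) \<le> g (hd X) + g (hd Y)"
      using assms by (auto simp: g_def kmeet_def kjoin_def)
  qed
  moreover have "\<forall>v \<in> {0..k}. v \<noteq> d \<longrightarrow> g d < g v" by (auto simp: g_def)
  ultimately show ?thesis by blast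
qed

theorem lemma2:
  fixes k :: nat
  assumes "k \<ge> 2"
  shows "(\<forall>n f Xs. k_submodular k n f \<and> is_minimiser f (tuples {0..k} n) Xs \<longrightarrow>
            (\<exists>X. is_minimiser f (tuples {1..k} n) X \<and>
                 (\<forall>i<n. Xs ! i \<noteq> 0 \<longrightarrow> X ! i = Xs ! i)))
       \<and> (\<forall>d \<in> {1..k}. \<exists>g :: nat \<Rightarrow> real.
            k_submodular k 1 (\<lambda>X. g (hd X)) \<and>
            (\<forall>v \<in> {0..k}. v \<noteq> d \<longrightarrow> g d < g v))"
  using k_submodular_persistent[of k] k_submodular_hard_constant[of _ k] assms by auto

end
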